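(* Let $A_1,\dots,A_m\in\mathbb{S}^n$, $b\in\mathbb{R}^m$, and let $p$ be such that $\frac{p(p+1)}{2}>\operatorname{rank}\mathcal{A}$ and Assumption 1 holds for $p$. Then for almost every $C\in\mathbb{S}^n$ (all $C$ outside a Lebesgue-null set), every critical point $Y\in\mathcal{M}_p$ of (P) satisfies $\operatorname{rank}(Y)<p$.
   Context: $\mathbb{S}^n$: real symmetric $n\times n$ matrices; $\langle U,V\rangle=\operatorname{tr}(U^\top V)$. $\mathcal{A}:\mathbb{S}^n\to\mathbb{R}^m$, $\mathcal{A}(X)_i=\langle A_i,X\rangle$, adjoint $\mathcal{A}^*(\nu)=\sum_i\nu_iA_i$; $\operatorname{rank}\mathcal{A}$ is the rank of this linear map. $\mathcal{M}_p=\{Y\in\mathbb{R}^{n\times p}:\mathcal{A}(YY^\top)=b\}$; (P): minimize $\langle CY,Y\rangle$ over $\mathcal{M}_p$. Assumption 1 (for $p$ with $\mathcal{M}_p\ne\emptyset$): either (a) $A_1Y,\dots,A_mY$ are linearly independent for all $Y\in\mathcal{M}_p$, or (b) $\operatorname{span}\{A_1Y,\dots,A_mY\}$ has constant dimension on an open neighborhood of $\mathcal{M}_p$ in $\mathbb{R}^{n\times p}$. For $Y\in\mathcal{M}_p$: $G_{ij}=\langle A_iY,A_jY\rangle$, $\mu=G^\dagger\mathcal{A}(CYY^\top)$, $S(Y)=C-\mathcal{A}^*(\mu)$. $Y$ is a critical point of (P) if $S(Y)Y=0$. *)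

theory Defs
  imports "HOL-Analysis.Analysis"
begin

definition frob :: "real^'p^'n \<Rightarrow> real^'p^'n \<Rightarrow> real" where
  "frob U V = trace (transpose U ** V)"

definition symmat :: "(real^'n^'n) set" where
  "symmat = {X. transpose X = X}"

definition Aop :: "('m::finite \<Rightarrow> real^'n^'n) \<Rightarrow> real^'n^'n \<Rightarrow> real^'m" where
  "Aop A X = (\<chi> i. frob (A i) X)"

definition Aadj :: "('m::finite \<Rightarrow> real^'n^'n) \<Rightarrow> real^'m \<Rightarrow> real^'n^'n" where
  "Aadj A \<nu> = (\<Sum>i\<in>UNIV. (\<nu> $ i) *\<^sub>R A i)"

definition rankA :: "('m::finite \<Rightarrow> real^'n^'n) \<Rightarrow> nat" where
  "rankA A = dim (Aop A ` symmat)"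

definition Mset :: "('m::finite \<Rightarrow> real^'n^'n) \<Rightarrow> real^'m \<Rightarrow> (real^'p^'n) set" where
  "Mset A b = {Y. Aop A (Y ** transpose Y) = b}"

definition pinv :: "real^'k^'k \<Rightarrow> real^'k^'k" where
  "pinv G = (THE H. G ** H ** G = G \<and> H ** G ** H = H \<and>
                    transpose (G ** H) = G ** H \<and> transpose (H ** G) = H ** G)"

(* Assumption 1 for p (p = CARD('p), encoded by the type of Y) *)
definition assumption1 :: "('m::finite \<Rightarrow> real^'n^'n) \<Rightarrow> real^'m \<Rightarrow> ('p::finite) itself \<Rightarrow> bool" where
  "assumption1 A b _ \<longleftrightarrow>
     ((Mset A b :: (real^'p^'n) set) \<noteq> {} \<longrightarrow>
       ((\<forall>Y\<in>(Mset A b :: (real^'p^'n) set).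
           \<forall>c::real^'m. (\<Sum>i\<in>UNIV. (c $ i) *\<^sub>R (A i ** Y)) = 0 \<longrightarrow> c = 0)
        \<or> (\<exists>U::(real^'p^'n) set. open U \<and> Mset A b \<subseteq> U \<and>
              (\<exists>k. \<forall>Y\<in>U. dim (span ((\<lambda>i. A i ** Y) ` UNIV)) = k))))"

definition Gram :: "('m::finite \<Rightarrow> real^'n^'n) \<Rightarrow> real^'p^'n \<Rightarrow> real^'m^'m" where
  "Gram A Y = (\<chi> i j. frob (A i ** Y) (A j ** Y))"

definition mu :: "('m::finite \<Rightarrow> real^'n^'n) \<Rightarrow> real^'n^'n \<Rightarrow> real^'p^'n \<Rightarrow> real^'m" where
  "mu A C Y = pinv (Gram A Y) *v Aop A (C ** Y ** transpose Y)"

definition Smat :: "('m::finite \<Rightarrow> real^'n^'n) \<Rightarrow> real^'n^'n \<Rightarrow> real^'p^'n \<Rightarrow> real^'n^'n" where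
  "Smat A C Y = C - Aadj A (mu A C Y)"

definition critical :: "('m::finite \<Rightarrow> real^'n^'n) \<Rightarrow> real^'m \<Rightarrow> real^'n^'n \<Rightarrow> real^'p^'n \<Rightarrow> bool" where
  "critical A b C Y \<longleftrightarrow> Y \<in> Mset A b \<and> Smat A C Y ** Y = 0"

(* Lebesgue-null subset of S^n: S^n is identified with Euclidean space through the
   linear surjection X |-> (X + X^T)/2 from R^{n x n}; a set N of symmetric matrices
   is null iff its preimage is a Lebesgue null set in R^{n x n}. *)
definition sym_null :: "(real^'n^'n) set \<Rightarrow> bool" where
  "sym_null N \<longleftrightarrow> N \<subseteq> symmat \<and>
     {X::real^'n^'n. (1/2) *\<^sub>R (X + transpose X) \<in> N} \<in> null_sets lebesgue"

end

theory Submission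
  imports Defs
begin

(* A full-rank Y with S(Y) Y = 0 forces the symmetric matrix S = C - A^*(mu) to have nullity at
   least p. Choosing p rows of Y that form a basis of R^p, indexed by I, the kernel of S contains
   vectors that restrict to unit vectors on I, and this lets S be written as R^T T R with
   R = E - Z, where E projects onto the coordinates outside I, Z is an (n-p) x p block and T is a
   symmetric (n-p) x (n-p) block. So C lies in the image of the smooth map (Z, T, w) |-> R^T T R + w
   with w in the range of A^*, and every X whose symmetric part is such a C lies in the image of
   that map plus a skew summand. For fixed I the parameters range over a space of dimension at most
   (n-p) p + (n-p)(n-p+1)/2 + rank A + n(n-1)/2 < n^2, the inequality being p(p+1)/2 > rank A,
   and differentiable images of lower-dimensional subspaces are null. *)

lemma transpose_add: "transpose (X + Y) = transpose X + transpose (Y::real^'n^'m)"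
  by (simp add: transpose_def vec_eq_iff)

lemma transpose_diff: "transpose (X - Y) = transpose X - transpose (Y::real^'n^'m)"
  by (simp add: transpose_def vec_eq_iff)

lemma transpose_zero [simp]: "transpose (0::real^'n^'m) = 0"
  by (simp add: transpose_def vec_eq_iff)

lemma transpose_entry_eq: "transpose X = Y \<Longrightarrow> X$a$b = Y$b$a"
  by (auto simp: transpose_def)

lemma dim_le_by_linear_injection:
  fixes h :: "'a::euclidean_space \<Rightarrow> 'b::euclidean_space"
  assumes "linear h" "subspace V" "h ` V \<subseteq> U"
    and "\<And>x. x \<in> V \<Longrightarrow> h x = 0 \<Longrightarrow> x = 0"
  shows "dim V \<le> dim U"
proof -
  have "inj_on h (span V)"
    using assms linear_injective_on_subspace_0 by (simp add: span_eq_iff[THEN iffD2]) blast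
  then have "dim V = dim (h ` V)"
    by (simp add: dim_image_eq[OF \<open>linear h\<close>])
  also have "\<dots> \<le> dim U"
    by (rule dim_subset[OF \<open>h ` V \<subseteq> U\<close>])
  finally show ?thesis .
qed

definition supported_matrices :: "('a::finite \<times> 'b::finite) set \<Rightarrow> (real^'b^'a) set" where
  "supported_matrices K = {X. \<forall>a b. (a, b) \<notin> K \<longrightarrow> X$a$b = 0}"

lemma subspace_supported_matrices: "subspace (supported_matrices K)"
  unfolding subspace_def supported_matrices_def by auto

lemma dim_supported_matrices_le:
  fixes K :: "('a::finite \<times> 'b::finite) set"
  shows "dim (supported_matrices K) \<le> card K"
proof -
  define E :: "'a \<times> 'b \<Rightarrow> real^'b^'a"
    where "E = (\<lambda>(a, b). \<chi> i j. if i = a \<and> j = b then 1 else 0)"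
  have "X = (\<Sum>k\<in>K. X$fst k$snd k *\<^sub>R E k)" if "X \<in> supported_matrices K" for X
  proof -
    have "(\<Sum>k\<in>K. X$fst k$snd k *\<^sub>R E k) $ i $ j = X$i$j" for i j
    proof -
      have "(\<Sum>k\<in>K. X$fst k$snd k *\<^sub>R E k) $ i $ j = (\<Sum>k\<in>K. if k = (i, j) then X$i$j else 0)"
        unfolding sum_component by (rule sum.cong) (auto simp: E_def split: if_splits)
      then show ?thesis
        using that by (auto simp: supported_matrices_def)
    qed
    then show ?thesis by (simp add: vec_eq_iff)
  qed
  then have "supported_matrices K \<subseteq> span (E ` K)"
    by (metis (no_types, lifting) span_base span_scale span_sum subsetI imageI)
  then have "dim (supported_matrices K) \<le> card (E ` K)"
    by (rule dim_le_card) simp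
  also have "\<dots> \<le> card K"
    by (rule card_image_le) simp
  finally show ?thesis .
qed

lemma dim_le_card_if_determined_on:
  fixes V :: "(real^'b::finite^'a::finite) set"
  assumes "subspace V"
    and determined: "\<And>X. X \<in> V \<Longrightarrow> (\<And>a b. (a, b) \<in> K \<Longrightarrow> X$a$b = 0) \<Longrightarrow> X = 0"
  shows "dim V \<le> card K"
proof -
  define restrict :: "real^'b^'a \<Rightarrow> real^'b^'a"
    where "restrict X = (\<chi> a b. if (a, b) \<in> K then X$a$b else 0)" for X
  have "dim V \<le> dim (supported_matrices K)"
  proof (rule dim_le_by_linear_injection[OF _ \<open>subspace V\<close>])
    show "linear restrict"
      by (rule linearI) (auto simp: restrict_def vec_eq_iff)
    show "restrict ` V \<subseteq> supported_matrices K"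
      by (auto simp: restrict_def supported_matrices_def)
    fix X assume "X \<in> V" "restrict X = 0"
    show "X = 0"
    proof (rule determined[OF \<open>X \<in> V\<close>])
      fix a b assume "(a, b) \<in> K"
      then show "X$a$b = 0"
        using arg_cong[OF \<open>restrict X = 0\<close>, of "\<lambda>M. M$a$b"] by (simp add: restrict_def)
    qed
  qed
  also have "\<dots> \<le> card K"
    by (rule dim_supported_matrices_le)
  finally show ?thesis .
qed

lemma card_less_pairs:
  fixes f :: "'a \<Rightarrow> 'b::linorder"
  assumes "inj_on f J" "finite J"
  shows "2 * card {(a, b) \<in> J \<times> J. f a < f b} + card J = card J * card J"
proof -
  define Lt where "Lt = {(a, b) \<in> J \<times> J. f a < f b}"
  define Diag where "Diag = (\<lambda>a. (a, a)) ` J"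
  have fin: "finite Lt" "finite Diag"
    using \<open>finite J\<close> by (auto simp: Lt_def Diag_def intro: finite_subset[of _ "J \<times> J"])
  have "J \<times> J = (Lt \<union> prod.swap ` Lt) \<union> Diag"
    using \<open>inj_on f J\<close> by (auto simp: Lt_def Diag_def image_iff inj_on_def; metis linorder_neqE)
  also have "card \<dots> = card Lt + card (prod.swap ` Lt) + card Diag"
    using fin by (subst card_Un_disjoint, auto simp: Lt_def Diag_def)+
  also have "card (prod.swap ` Lt) = card Lt"
    by (rule card_image[OF inj_swap])
  also have "card Diag = card J"
    by (simp add: Diag_def card_image inj_on_def)
  finally show ?thesis
    by (simp add: Lt_def card_cartesian_product)
qed

lemma card_le_pairs:
  fixes f :: "'a \<Rightarrow> 'b::linorder"
  assumes "inj_on f J" "finite J"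
  shows "card {(a, b) \<in> J \<times> J. f a \<le> f b} = card {(a, b) \<in> J \<times> J. f a < f b} + card J"
proof -
  define Lt where "Lt = {(a, b) \<in> J \<times> J. f a < f b}"
  have "{(a, b) \<in> J \<times> J. f a \<le> f b} = Lt \<union> (\<lambda>a. (a, a)) ` J"
    using \<open>inj_on f J\<close> by (auto simp: Lt_def image_iff inj_on_def order.order_iff_strict)
  moreover have "card (Lt \<union> (\<lambda>a. (a, a)) ` J) = card Lt + card ((\<lambda>a. (a, a)) ` J)"
    using \<open>finite J\<close> by (intro card_Un_disjoint) (auto simp: Lt_def intro: finite_subset[of _ "J \<times> J"])
  moreover have "card ((\<lambda>a. (a, a)) ` J) = card J"
    by (simp add: card_image inj_on_def)
  ultimately show ?thesis
    by (simp add: Lt_def)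
qed

definition sym_block :: "'n::finite set \<Rightarrow> (real^'n^'n) set" where
  "sym_block J = {T \<in> supported_matrices (J \<times> J). transpose T = T}"

definition skew_matrices :: "(real^'n::finite^'n) set" where
  "skew_matrices = {L. transpose L = - L}"

lemma subspace_sym_block: "subspace (sym_block J)"
  using subspace_supported_matrices[of "J \<times> J"]
  unfolding subspace_def sym_block_def by (simp add: transpose_add transpose_scalar)

lemma subspace_skew_matrices: "subspace skew_matrices"
  unfolding subspace_def skew_matrices_def by (simp add: transpose_add transpose_scalar)

lemma dim_sym_block:
  fixes J :: "'n::finite set"
  shows "2 * dim (sym_block J) \<le> card J * card J + card J"
proof -
  obtain f :: "'n \<Rightarrow> nat" where "inj f"
    using finite_imp_inj_to_nat_seg[of "UNIV :: 'n set", OF finite] by blast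
  then have "inj_on f J"
    by (rule inj_on_subset) simp
  have "dim (sym_block J) \<le> card {(a, b) \<in> J \<times> J. f a \<le> f b}"
  proof (rule dim_le_card_if_determined_on[OF subspace_sym_block])
    fix X
    assume X: "X \<in> sym_block J"
      and upper: "\<And>a b. (a, b) \<in> {(a, b) \<in> J \<times> J. f a \<le> f b} \<Longrightarrow> X$a$b = 0"
    have "X$a$b = 0" for a b
    proof (cases "(a, b) \<in> J \<times> J")
      case False
      then show ?thesis using X by (auto simp: sym_block_def supported_matrices_def)
    next
      case True
      have "X$a$b = X$b$a"
        using X transpose_entry_eq[of X X b a] by (simp add: sym_block_def)
      then show ?thesis
        using upper[of a b] upper[of b a] True by (cases "f a \<le> f b") auto
    qed
    then show "X = 0" by (simp add: vec_eq_iff)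
  qed
  then show ?thesis
    using card_le_pairs[OF \<open>inj_on f J\<close>] card_less_pairs[OF \<open>inj_on f J\<close>] by simp
qed

lemma dim_skew_matrices:
  "2 * dim (skew_matrices :: (real^'n::finite^'n) set) + CARD('n) \<le> CARD('n) * CARD('n)"
proof -
  obtain f :: "'n \<Rightarrow> nat" where "inj f"
    using finite_imp_inj_to_nat_seg[of "UNIV :: 'n set", OF finite] by blast
  have "dim (skew_matrices :: (real^'n^'n) set) \<le> card {(a, b) \<in> UNIV \<times> UNIV. f a < f b}"
  proof (rule dim_le_card_if_determined_on[OF subspace_skew_matrices])
    fix X :: "real^'n^'n"
    assume X: "X \<in> skew_matrices"
      and upper: "\<And>a b. (a, b) \<in> {(a, b) \<in> UNIV \<times> UNIV. f a < f b} \<Longrightarrow> X$a$b = 0"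
    have "X$a$b = 0" for a b
    proof -
      have "X$a$b = - X$b$a"
        using X transpose_entry_eq[of X "- X" b a] by (simp add: skew_matrices_def)
      then show ?thesis
        using upper[of a b] upper[of b a] \<open>inj f\<close>
        by (cases "f a < f b"; cases "f b < f a") (auto simp: inj_eq)
    qed
    then show "X = 0" by (simp add: vec_eq_iff)
  qed
  then show ?thesis
    using card_less_pairs[of f UNIV] \<open>inj f\<close> by simp
qed

definition diag_proj :: "'n::finite set \<Rightarrow> real^'n^'n" where
  "diag_proj J = (\<chi> a b. if a = b \<and> a \<in> J then 1 else 0)"

lemma diag_proj_mult_entry: "(diag_proj J ** X) $ a $ b = (if a \<in> J then X$a$b else 0)"
proof -
  have "(diag_proj J ** X) $ a $ b = (\<Sum>c\<in>UNIV. diag_proj J $ a $ c * X$c$b)"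
    by (simp add: matrix_matrix_mult_def)
  also have "\<dots> = (\<Sum>c\<in>UNIV. if c = a then (if a \<in> J then X$c$b else 0) else 0)"
    by (rule sum.cong) (auto simp: diag_proj_def)
  finally show ?thesis
    by simp
qed

lemma mult_diag_proj_entry: "(X ** diag_proj J) $ a $ b = (if b \<in> J then X$a$b else 0)"
proof -
  have "(X ** diag_proj J) $ a $ b = (\<Sum>c\<in>UNIV. X$a$c * diag_proj J $ c $ b)"
    by (simp add: matrix_matrix_mult_def)
  also have "\<dots> = (\<Sum>c\<in>UNIV. if c = b then (if b \<in> J then X$a$c else 0) else 0)"
    by (rule sum.cong) (auto simp: diag_proj_def)
  finally show ?thesis
    by simp
qed

lemma transpose_diag_proj [simp]: "transpose (diag_proj J) = diag_proj J"
  by (simp add: diag_proj_def transpose_def vec_eq_iff)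

lemma sym_congruence_if_right_factor:
  fixes S E R :: "real^'n::finite^'n"
  assumes "transpose S = S" "transpose E = E" "S = S ** E ** R"
  shows "S = transpose R ** (E ** S ** E) ** R"
proof -
  have "S = transpose R ** E ** S"
    using arg_cong[OF \<open>S = S ** E ** R\<close>, of transpose] assms(1,2)
    by (simp add: matrix_transpose_mul matrix_mul_assoc)
  then show ?thesis
    by (metis \<open>S = S ** E ** R\<close> matrix_mul_assoc)
qed

lemma sym_factor_through_kernel:
  fixes S :: "real^'n::finite^'n"
  assumes "transpose S = S"
    and kernel: "\<And>b. b \<in> I \<Longrightarrow> S *v v b = 0"
    and unit: "\<And>a b. a \<in> I \<Longrightarrow> b \<in> I \<Longrightarrow> v b $ a = (if a = b then 1 else 0)"
  shows "\<exists>Z \<in> supported_matrices ((- I) \<times> I). \<exists>T \<in> sym_block (- I).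
           S = transpose (diag_proj (- I) - Z) ** T ** (diag_proj (- I) - Z)"
proof -
  define E where "E = diag_proj (- I)"
  define K :: "real^'n^'n" where "K = (\<chi> a b. if b \<in> I then v b $ a else 0)"
  define Z :: "real^'n^'n" where "Z = (\<chi> a b. if a \<notin> I \<and> b \<in> I then v b $ a else 0)"
  define R where "R = E - Z"
  have "S ** K = 0"
  proof -
    have "(S ** K) $ a $ b = (if b \<in> I then (S *v v b) $ a else 0)" for a b
      by (simp add: matrix_matrix_mult_def matrix_vector_mult_def K_def if_distrib cong: if_cong)
    then have "(S ** K) $ a $ b = 0" for a b
      using kernel by simp
    then show ?thesis
      by (simp add: vec_eq_iff)
  qed
  have "mat 1 = K + E ** R"
  proof -
    have "mat 1 $ a $ b = K $ a $ b + (E ** R) $ a $ b" for a b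
      unfolding E_def diag_proj_mult_entry using unit
      by (cases "a \<in> I"; cases "b \<in> I") (auto simp: mat_def K_def R_def Z_def E_def diag_proj_def)
    then show ?thesis
      by (simp add: vec_eq_iff)
  qed
  then have "S = S ** E ** R"
    by (metis \<open>S ** K = 0\<close> add_0 matrix_add_ldistrib matrix_mul_assoc matrix_mul_rid)
  then have "S = transpose R ** (E ** S ** E) ** R"
    using sym_congruence_if_right_factor[OF \<open>transpose S = S\<close>] by (simp add: E_def)
  moreover have "Z \<in> supported_matrices ((- I) \<times> I)"
    by (auto simp: supported_matrices_def Z_def)
  moreover have "E ** S ** E \<in> sym_block (- I)"
    by (auto simp: sym_block_def supported_matrices_def E_def diag_proj_mult_entry
        mult_diag_proj_entry matrix_transpose_mul \<open>transpose S = S\<close> matrix_mul_assoc)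
  ultimately show ?thesis
    unfolding R_def E_def by blast
qed

lemma full_rank_row_basis:
  fixes Y :: "real^'p::finite^'n::finite"
  assumes "rank Y = CARD('p)"
  obtains I where "card I = CARD('p)" "span ((\<lambda>i. row i Y) ` I) = UNIV"
proof -
  have "span (rows Y) = UNIV"
    using assms dim_eq_full[of "rows Y"] by (simp add: row_rank_def)
  obtain B where B: "B \<subseteq> rows Y" "independent B" "rows Y \<subseteq> span B"
    using maximal_independent_subset by blast
  have "span B = UNIV"
    using B \<open>span (rows Y) = UNIV\<close> by (metis span_eq top.extremum_uniqueI span_mono span_span)
  have "rows Y = (\<lambda>i. row i Y) ` UNIV"
    by (auto simp: rows_def)
  then obtain I where inj: "inj_on (\<lambda>i. row i Y) I" and "B = (\<lambda>i. row i Y) ` I"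
    using B(1) subset_image_inj by metis
  have "card B = CARD('p)"
    using dim_span_eq_card_independent[OF B(2)] \<open>span B = UNIV\<close> by simp
  then have "card I = CARD('p)"
    using card_image[OF inj] \<open>B = _\<close> by simp
  with \<open>span B = UNIV\<close> \<open>B = _\<close> show thesis
    using that by blast
qed

lemma full_rank_unit_coordinates:
  fixes Y :: "real^'p::finite^'n::finite"
  assumes "rank Y = CARD('p)"
  obtains I x where "card I = CARD('p)"
    and "\<And>a b. a \<in> I \<Longrightarrow> b \<in> I \<Longrightarrow> (Y *v x b) $ a = (if a = b then 1 else 0)"
proof -
  obtain I where "card I = CARD('p)" and rows_span: "span ((\<lambda>i. row i Y) ` I) = UNIV"
    using full_rank_row_basis[OF assms] by blast
  \<comment> \<open>\<psi> is injective because the rows indexed by I span, hence onto R^I by dimension\<close>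
  define \<psi> where "\<psi> x = (\<chi> k. if k \<in> I then (Y *v x) $ k else 0)" for x
  define Sub where "Sub = {u :: real^'n. \<forall>i. i \<notin> I \<longrightarrow> u$i = 0}"
  have "linear \<psi>"
    by (rule linearI)
      (auto simp: \<psi>_def vec_eq_iff matrix_vector_mult_def sum.distrib sum_distrib_left algebra_simps)
  have "x = 0" if "\<psi> x = 0" for x
  proof -
    have "orthogonal x (row i Y)" if "i \<in> I" for i
      using arg_cong[OF \<open>\<psi> x = 0\<close>, of "\<lambda>u. u $ i"] \<open>i \<in> I\<close>
      by (simp add: \<psi>_def matrix_vector_mul_component orthogonal_def inner_commute row_def
          vec_lambda_eta)
    then have "orthogonal x x"
      using orthogonal_to_span[of x "(\<lambda>i. row i Y) ` I" x] rows_span by blast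
    then show "x = 0"
      by (simp add: orthogonal_def)
  qed
  then have "inj_on \<psi> (span UNIV)"
    using linear_injective_on_subspace_0[OF \<open>linear \<psi>\<close> subspace_UNIV] by auto
  then have "dim (range \<psi>) = card I"
    using dim_image_eq[OF \<open>linear \<psi>\<close>] \<open>card I = CARD('p)\<close> by simp
  moreover have "dim Sub = card I"
    using dim_substandard_cart[of I, where 'a=real] by (simp add: Sub_def dim_vec_eq)
  moreover have "range \<psi> \<subseteq> Sub" "subspace Sub"
    by (auto simp: \<psi>_def Sub_def subspace_def)
  ultimately have "span (range \<psi>) = span Sub"
    by (intro dim_eq_span) simp_all
  then have "range \<psi> = Sub"
    using \<open>subspace Sub\<close> linear_subspace_image[OF \<open>linear \<psi>\<close> subspace_UNIV]
    by (simp add: span_eq_iff[THEN iffD2])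
  moreover have "axis b 1 \<in> Sub" if "b \<in> I" for b
    using that by (simp add: Sub_def axis_def)
  ultimately have "\<forall>b \<in> I. \<exists>x. \<psi> x = axis b 1"
    by (metis rangeE)
  then obtain x where x: "\<And>b. b \<in> I \<Longrightarrow> \<psi> (x b) = axis b 1"
    by metis
  have "(Y *v x b) $ a = (if a = b then 1 else 0)" if "a \<in> I" "b \<in> I" for a b
    using arg_cong[OF x[OF \<open>b \<in> I\<close>], of "\<lambda>u. u $ a"] \<open>a \<in> I\<close>
    by (simp add: \<psi>_def axis_def)
  with \<open>card I = CARD('p)\<close> show thesis
    using that by blast
qed

lemma sym_nullity_factorization:
  fixes S :: "real^'n::finite^'n" and Y :: "real^'p::finite^'n"
  assumes "transpose S = S" "S ** Y = 0" "rank Y = CARD('p)"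
  obtains I Z T
  where "card I = CARD('p)" "Z \<in> supported_matrices ((- I) \<times> I)" "T \<in> sym_block (- I)"
    and "S = transpose (diag_proj (- I) - Z) ** T ** (diag_proj (- I) - Z)"
proof -
  obtain I x where "card I = CARD('p)"
    and unit: "\<And>a b. a \<in> I \<Longrightarrow> b \<in> I \<Longrightarrow> (Y *v x b) $ a = (if a = b then 1 else 0)"
    using full_rank_unit_coordinates[OF \<open>rank Y = CARD('p)\<close>] by blast
  moreover have "S *v (Y *v x b) = 0" for b
    by (simp add: matrix_vector_mul_assoc \<open>S ** Y = 0\<close>)
  ultimately show thesis
    using sym_factor_through_kernel[OF \<open>transpose S = S\<close>, of I "\<lambda>b. Y *v x b"] that by blast
qed

lemma negligible_differentiable_image_lowdim_subspace:
  fixes g :: "'a::euclidean_space \<Rightarrow> 'b::euclidean_space"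
  assumes "subspace D" "dim D < DIM('b)" "\<And>x. g differentiable (at x)"
  shows "negligible (g ` D)"
proof -
  have "dim D \<le> dim (UNIV :: 'b set)"
    using \<open>dim D < DIM('b)\<close> by simp
  then obtain D0 :: "'b set" where D0: "subspace D0" "dim D0 = dim D"
    by (metis choose_subspace_of_subspace)
  obtain f :: "'b \<Rightarrow> 'a" where f: "linear f" "f ` D0 = D"
    using isometries_subspaces[OF D0(1) \<open>subspace D\<close> D0(2)] by metis
  have "negligible D0"
    using D0 \<open>dim D < DIM('b)\<close> by (intro negligible_lowdim) simp
  moreover have "(g \<circ> f) differentiable_on D0"
    unfolding differentiable_on_def
    using assms(3) f(1)
    by (metis differentiable_at_withinI differentiable_chain_at linear_imp_differentiable)
  ultimately have "negligible ((g \<circ> f) ` D0)"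
    by (intro negligible_differentiable_image_negligible) auto
  then show ?thesis
    by (simp add: f(2)[symmetric] image_image)
qed

lemma bounded_bilinear_matrix_mult:
  "bounded_bilinear ((**) :: real^'n::finite^'m::finite \<Rightarrow> real^'k::finite^'n \<Rightarrow> real^'k^'m)"
  by (rule bilinear_conv_bounded_bilinear[THEN iffD1])
    (auto simp: bilinear_def vec_eq_iff matrix_matrix_mult_def sum.distrib algebra_simps
      sum_distrib_left intro!: linearI)

lemma differentiable_matrix_mult:
  fixes f :: "'a::real_normed_vector \<Rightarrow> real^'n::finite^'m::finite"
    and g :: "'a \<Rightarrow> real^'k::finite^'n"
  assumes "f differentiable (at x)" "g differentiable (at x)"
  shows "(\<lambda>x. f x ** g x) differentiable (at x)"
  using assms bounded_bilinear.FDERIV[OF bounded_bilinear_matrix_mult]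
  unfolding differentiable_def by blast

definition congruence_chart ::
  "real^'n::finite^'n \<Rightarrow> (real^'n^'n) \<times> (real^'n^'n) \<times> (real^'n^'n) \<times> (real^'n^'n) \<Rightarrow> real^'n^'n"
where
  "congruence_chart E = (\<lambda>(Z, T, w, L). transpose (E - Z) ** T ** (E - Z) + w + L)"

lemma differentiable_congruence_chart: "congruence_chart E differentiable (at x)"
  unfolding congruence_chart_def case_prod_beta transpose_diff
  by (intro differentiable_add differentiable_matrix_mult differentiable_diff differentiable_const
      linear_imp_differentiable linearI) (simp_all add: transpose_add transpose_scalar)

definition congruence_chart_domain ::
  "'n::finite set \<Rightarrow> (real^'n^'n) set \<Rightarrow> ((real^'n^'n) \<times> (real^'n^'n) \<times> (real^'n^'n) \<times> (real^'n^'n)) set"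
where
  "congruence_chart_domain I W =
     supported_matrices ((- I) \<times> I) \<times> sym_block (- I) \<times> W \<times> skew_matrices"

lemma negligible_congruence_chart_image:
  fixes I :: "'n::finite set" and W :: "(real^'n^'n) set"
  assumes "subspace W" and small: "2 * dim W < card I * (card I + 1)"
  shows "negligible (congruence_chart E ` congruence_chart_domain I W)"
proof (rule negligible_differentiable_image_lowdim_subspace[OF _ _ differentiable_congruence_chart])
  show "subspace (congruence_chart_domain I W)"
    unfolding congruence_chart_domain_def
    by (intro subspace_Times subspace_supported_matrices subspace_sym_block subspace_skew_matrices
        \<open>subspace W\<close>)
  define n where "n = CARD('n)"
  define r where "r = card (- I)"
  have "n = r + card I"
    using card_Un_disjoint[of I "- I"] by (simp add: n_def r_def)
  have "dim (supported_matrices ((- I) \<times> I)) \<le> r * card I"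
    using dim_supported_matrices_le[of "(- I) \<times> I"] by (simp add: card_cartesian_product r_def)
  moreover have "2 * dim (sym_block (- I)) \<le> r * r + r"
    using dim_sym_block[of "- I"] by (simp add: r_def)
  moreover have "2 * dim (skew_matrices :: (real^'n^'n) set) + n \<le> n * n"
    using dim_skew_matrices by (simp add: n_def)
  moreover have "n * n = r * r + 2 * (r * card I) + card I * card I"
    by (simp add: \<open>n = r + card I\<close> algebra_simps)
  ultimately have "dim (congruence_chart_domain I W) < n * n"
    using small \<open>n = r + card I\<close> unfolding congruence_chart_domain_def
    by (simp add: dim_Times subspace_Times subspace_supported_matrices subspace_sym_block
        subspace_skew_matrices \<open>subspace W\<close> algebra_simps)
  then show "dim (congruence_chart_domain I W) < DIM(real^'n^'n)"
    by (simp add: n_def)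
qed

lemma frob_eq_inner: "frob U V = U \<bullet> V"
  unfolding frob_def trace_def inner_vec_def
  by (simp add: matrix_matrix_mult_def transpose_def) (rule sum.swap)

lemma linear_Aadj: "linear (Aadj A)"
  by (rule linearI) (simp_all add: Aadj_def scaleR_add_left sum.distrib scaleR_sum_right)

lemma Aadj_in_symmat:
  assumes "\<And>i. A i \<in> symmat"
  shows "Aadj A \<nu> \<in> symmat"
proof -
  have "A i $ a $ b = A i $ b $ a" for i a b
    using assms[of i] transpose_entry_eq[of "A i" "A i" a b] by (simp add: symmat_def)
  then show ?thesis
    by (simp add: symmat_def Aadj_def vec_eq_iff transpose_def sum_component)
qed

lemma dim_range_Aadj_le_rankA:
  assumes "\<And>i. A i \<in> symmat"
  shows "dim (range (Aadj A)) \<le> rankA A"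
  unfolding rankA_def
proof (rule dim_le_by_linear_injection)
  show "linear (Aop A)"
    by (rule linearI) (simp_all add: Aop_def frob_eq_inner vec_eq_iff inner_add_right)
  show "subspace (range (Aadj A))"
    by (rule linear_subspace_image[OF linear_Aadj subspace_UNIV])
  show "Aop A ` range (Aadj A) \<subseteq> Aop A ` symmat"
    using Aadj_in_symmat[of A, OF assms] by blast
  fix X assume "X \<in> range (Aadj A)" "Aop A X = 0"
  then obtain \<nu> where "X = Aadj A \<nu>"
    by blast
  then have "X \<bullet> X = (\<Sum>i\<in>UNIV. \<nu> $ i * (A i \<bullet> X))"
    by (simp add: Aadj_def inner_sum_left)
  also have "\<dots> = 0"
    using \<open>Aop A X = 0\<close> by (simp add: Aop_def frob_eq_inner vec_eq_iff)
  finally show "X = 0"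
    by simp
qed

lemma in_congruence_chart_image_if_full_rank_kernel:
  fixes X :: "real^'n::finite^'n" and Y :: "real^'p::finite^'n"
  assumes symA: "\<And>i. A i \<in> symmat"
    and "rank Y = CARD('p)" and critical: "Smat A ((1/2) *\<^sub>R (X + transpose X)) Y ** Y = 0"
  shows "\<exists>I. card I = CARD('p) \<and>
           X \<in> congruence_chart (diag_proj (- I)) ` congruence_chart_domain I (range (Aadj A))"
proof -
  define C where "C = (1/2) *\<^sub>R (X + transpose X)"
  define w where "w = Aadj A (mu A C Y)"
  define L where "L = (1/2) *\<^sub>R (X - transpose X)"
  have "transpose C = C"
    by (simp add: C_def transpose_add transpose_scalar add.commute)
  moreover have "transpose w = w"
    using Aadj_in_symmat[of A, OF symA] by (simp add: w_def symmat_def)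
  ultimately have "transpose (Smat A C Y) = Smat A C Y"
    by (simp add: Smat_def transpose_diff w_def)
  then obtain I Z T
    where "card I = CARD('p)" "Z \<in> supported_matrices ((- I) \<times> I)" "T \<in> sym_block (- I)"
      and factor: "Smat A C Y = transpose (diag_proj (- I) - Z) ** T ** (diag_proj (- I) - Z)"
    using sym_nullity_factorization critical \<open>rank Y = CARD('p)\<close> unfolding C_def by metis
  have "L \<in> skew_matrices"
    by (simp add: skew_matrices_def L_def transpose_scalar transpose_diff algebra_simps)
  then have "(Z, T, w, L) \<in> congruence_chart_domain I (range (Aadj A))"
    using \<open>Z \<in> _\<close> \<open>T \<in> _\<close> by (simp add: congruence_chart_domain_def w_def)
  moreover have "X = Smat A C Y + w + L"
    by (simp add: Smat_def w_def L_def C_def vec_eq_iff transpose_def field_simps)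
  then have "X = congruence_chart (diag_proj (- I)) (Z, T, w, L)"
    by (simp add: congruence_chart_def factor)
  ultimately show ?thesis
    using \<open>card I = CARD('p)\<close> by blast
qed

theorem lemma3:
  fixes A :: "'m::finite \<Rightarrow> real^'n::finite^'n"
    and b :: "real^'m"
  assumes symA: "\<And>i. A i \<in> symmat"
    and prank: "CARD('p::finite) * (CARD('p) + 1) > 2 * rankA A"
    and ass1: "assumption1 A b TYPE('p)"
  shows "\<exists>N. sym_null N \<and>
           (\<forall>C\<in>symmat - N. \<forall>Y::real^'p^'n. critical A b C Y \<longrightarrow> rank Y < CARD('p))"
proof -
  define N where "N = {C \<in> symmat. \<exists>Y :: real^'p^'n. rank Y = CARD('p) \<and> Smat A C Y ** Y = 0}"
  define W where "W = range (Aadj A)"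
  define G where "G = (\<Union>I \<in> {I. card I = CARD('p)}.
    congruence_chart (diag_proj (- I)) ` congruence_chart_domain I W)"
  have "subspace W"
    unfolding W_def by (rule linear_subspace_image[OF linear_Aadj subspace_UNIV])
  have "2 * dim W < card I * (card I + 1)" if "card I = CARD('p)" for I :: "'n set"
    using dim_range_Aadj_le_rankA[of A, OF symA] prank that by (simp add: W_def)
  then have "negligible G"
    unfolding G_def
    by (intro negligible_Union) (auto intro: negligible_congruence_chart_image[OF \<open>subspace W\<close>])
  moreover have "{X. (1/2) *\<^sub>R (X + transpose X) \<in> N} \<subseteq> G"
    using in_congruence_chart_image_if_full_rank_kernel[of A, OF symA] by (auto simp: N_def W_def G_def)
  ultimately have "sym_null N"
    unfolding sym_null_def by (auto simp: N_def negligible_iff_null_sets[symmetric] intro: negligible_subset)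
  moreover have "rank Y < CARD('p)" if "C \<in> symmat - N" "critical A b C Y" for C and Y :: "real^'p^'n"
  proof -
    have "rank Y \<noteq> CARD('p)"
      using that by (auto simp: N_def critical_def)
    then show ?thesis
      using rank_bound[of Y] by linarith
  qed
  ultimately show ?thesis
    by blast
qed

end
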